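(* Let $X\subseteq\mathbb R^2$ be a nonempty compact set. If the Riesz space $\mathcal R(X)$ has a principal ideal that is not an intersection of maximal ideals of $\mathcal R(X)$, then $X$ has an outgoing Severi–Bouligand tangent at some point $x\in X$.
   Context: Severi–Bouligand tangent: for $\emptyset\ne X\subseteq\mathbb R^n$ and $x\in\mathbb R^n$, a unit vector $u$ is a Severi–Bouligand tangent of $X$ at $x$ if $X$ contains a sequence $\{x_i\}$ with $x_i\neq x$ for all $i$, $x_i\to x$, and $(x_i-x)/\|x_i-x\|\to u$. It is outgoing if in addition $\operatorname{conv}(x,x+\mu u)\cap X=\{x\}$ for some $\mu>0$. $\mathcal R(X)$: for a nonempty compact $X\subseteq\mathbb R^n$, choose a closed $n$-cube $K\supseteq X$; a function $g\colon K\to\mathbb R$ is piecewise linear if there is a (finite) triangulation $\Delta$ of $K$ such that $g$ is continuous and affine linear on each simplex of $\Delta$. $\mathcal R(X)$ is the set of restrictions to $X$ of piecewise linear functions on $K$ (independent of the choice of $K$), a Riesz space (vector lattice) under pointwise operations. The principal ideal generated by $g$ is $\{f\in\mathcal R(X): |f|\le m|g| \text{ for some } m\in\mathbb N\}$. *)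

theory Defs
  imports "HOL-Analysis.Analysis"
begin

definition SB_tangent :: "(real^2) set \<Rightarrow> real^2 \<Rightarrow> real^2 \<Rightarrow> bool" where
  "SB_tangent X x u \<longleftrightarrow> norm u = 1 \<and>
     (\<exists>s :: nat \<Rightarrow> real^2. (\<forall>i. s i \<in> X \<and> s i \<noteq> x) \<and> s \<longlonglongrightarrow> x \<and>
        (\<lambda>i. (1 / norm (s i - x)) *\<^sub>R (s i - x)) \<longlonglongrightarrow> u)"

definition outgoing_SB_tangent :: "(real^2) set \<Rightarrow> real^2 \<Rightarrow> real^2 \<Rightarrow> bool" where
  "outgoing_SB_tangent X x u \<longleftrightarrow> SB_tangent X x u \<and>
     (\<exists>\<mu>>0. closed_segment x (x + \<mu> *\<^sub>R u) \<inter> X = {x})"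

definition closed_cube :: "(real^2) set \<Rightarrow> bool" where
  "closed_cube K \<longleftrightarrow> (\<exists>a d. d > 0 \<and> K = cbox a (a + (\<chi> i. d)))"

definition piecewise_linear_on :: "(real^2) set \<Rightarrow> (real^2 \<Rightarrow> real) \<Rightarrow> bool" where
  "piecewise_linear_on K g \<longleftrightarrow>
     (\<exists>\<T>. triangulation \<T> \<and> \<Union>\<T> = K \<and> continuous_on K g \<and>
        (\<forall>T\<in>\<T>. \<exists>(c::real^2) (b::real). \<forall>y\<in>T. g y = c \<bullet> y + b))"

text \<open>R(X): restrictions to X of piecewise linear functions on a closed cube containing X.
  Functions are normalised to be 0 outside X, so that elements of R(X) are determined
  by their values on X.\<close>
definition RX :: "(real^2) set \<Rightarrow> (real^2 \<Rightarrow> real) set" where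
  "RX X = {f. \<exists>K g. closed_cube K \<and> X \<subseteq> K \<and> piecewise_linear_on K g \<and>
                    (\<forall>y. f y = (if y \<in> X then g y else 0))}"

definition riesz_ideal :: "(real^2) set \<Rightarrow> (real^2 \<Rightarrow> real) set \<Rightarrow> bool" where
  "riesz_ideal X I \<longleftrightarrow> I \<subseteq> RX X \<and> (\<lambda>y. 0) \<in> I \<and>
     (\<forall>f\<in>I. \<forall>g\<in>I. (\<lambda>y. f y + g y) \<in> I) \<and> (\<forall>f\<in>I. \<forall>c::real. (\<lambda>y. c * f y) \<in> I) \<and>
     (\<forall>f\<in>RX X. \<forall>g\<in>I. (\<forall>y\<in>X. \<bar>f y\<bar> \<le> \<bar>g y\<bar>) \<longrightarrow> f \<in> I)"

definition maximal_ideal :: "(real^2) set \<Rightarrow> (real^2 \<Rightarrow> real) set \<Rightarrow> bool" where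
  "maximal_ideal X M \<longleftrightarrow> riesz_ideal X M \<and> M \<noteq> RX X \<and>
     (\<forall>J. riesz_ideal X J \<and> M \<subseteq> J \<longrightarrow> J = M \<or> J = RX X)"

definition principal_ideal :: "(real^2) set \<Rightarrow> (real^2 \<Rightarrow> real) \<Rightarrow> (real^2 \<Rightarrow> real) set" where
  "principal_ideal X g = {f \<in> RX X. \<exists>m::nat. \<forall>y\<in>X. \<bar>f y\<bar> \<le> real m * \<bar>g y\<bar>}"

text \<open>I is an intersection of maximal ideals (intersection taken inside R(X), so the
  empty family yields R(X)).\<close>
definition inter_of_maximal_ideals :: "(real^2) set \<Rightarrow> (real^2 \<Rightarrow> real) set \<Rightarrow> bool" where
  "inter_of_maximal_ideals X I \<longleftrightarrow>
     (\<exists>\<M>. (\<forall>M\<in>\<M>. maximal_ideal X M) \<and> I = RX X \<inter> \<Inter>\<M>)"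

end

theory Submission
  imports Defs
begin

text \<open>
  Suppose X has no outgoing tangent. It suffices to show that every f \<in> R(X) vanishing on the zeros
  of g satisfies \<bar>f\<bar> \<le> m \<bar>g\<bar> on X for some m: then the principal ideal of g is the intersection of
  the maximal ideals {f. f x = 0} over the zeros x of g. If no such m exists, pick points y m \<in> X with
  m \<bar>g (y m)\<bar> < \<bar>f (y m)\<bar>. A subsequence stays in one cell on which f and g are affine, converges to
  a point x where g, and hence f, vanishes, and approaches x from a direction u. On that cell
  g y = c \<bullet> (y - x) and f y = d \<bullet> (y - x), and the inequality forces c \<bullet> u = 0. An initial piece
  of the ray from x in direction u lies in the cell; as u is a tangent that is not outgoing, the ray
  meets X there in zeros of g, hence of f, so d \<bullet> u = 0 as well. In the plane this makes c and d
  parallel, and then \<bar>f\<bar> \<le> m \<bar>g\<bar> on the cell after all.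
\<close>

section \<open>Piecewise linear functions and cell complexes\<close>

definition affine_on :: "'a::real_inner set \<Rightarrow> ('a \<Rightarrow> real) \<Rightarrow> bool" where
  "affine_on S f \<longleftrightarrow> (\<exists>c b. \<forall>y\<in>S. f y = c \<bullet> y + b)"

lemma affine_on_subset: "affine_on S f \<Longrightarrow> T \<subseteq> S \<Longrightarrow> affine_on T f"
  unfolding affine_on_def by blast

lemma affine_on_add:
  assumes "affine_on S f" "affine_on S g" shows "affine_on S (\<lambda>y. f y + g y)"
proof -
  obtain c b d e where "\<forall>y\<in>S. f y = c \<bullet> y + b" "\<forall>y\<in>S. g y = d \<bullet> y + e"
    using assms unfolding affine_on_def by blast
  then have "\<forall>y\<in>S. f y + g y = (c + d) \<bullet> y + (b + e)"
    by (simp add: inner_add_left)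
  then show ?thesis unfolding affine_on_def by blast
qed

lemma affine_on_cmult:
  assumes "affine_on S f" shows "affine_on S (\<lambda>y. r * f y)"
proof -
  obtain c b where "\<forall>y\<in>S. f y = c \<bullet> y + b"
    using assms unfolding affine_on_def by blast
  then have "\<forall>y\<in>S. r * f y = (r *\<^sub>R c) \<bullet> y + r * b"
    by (simp add: algebra_simps)
  then show ?thesis unfolding affine_on_def by blast
qed

lemma affine_on_const: "affine_on S (\<lambda>y. r)"
  unfolding affine_on_def by (rule exI[of _ 0]) simp

definition cell_complex :: "'a::euclidean_space set set \<Rightarrow> bool" where
  "cell_complex \<M> \<longleftrightarrow> finite \<M> \<and> (\<forall>C\<in>\<M>. polytope C) \<and> (\<forall>C\<in>\<M>. \<forall>D\<in>\<M>. C \<inter> D face_of C)"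

lemma cell_complex_Int:
  assumes "cell_complex \<M>" "cell_complex \<N>"
  shows "cell_complex ((\<lambda>(C, D). C \<inter> D) ` (\<M> \<times> \<N>))"
  unfolding cell_complex_def
proof (intro conjI ballI)
  show "finite ((\<lambda>(C, D). C \<inter> D) ` (\<M> \<times> \<N>))"
    using assms by (simp add: cell_complex_def)
  show "polytope P" if "P \<in> (\<lambda>(C, D). C \<inter> D) ` (\<M> \<times> \<N>)" for P
    using that assms by (auto simp: cell_complex_def intro: polytope_Int)
  fix P Q assume "P \<in> (\<lambda>(C, D). C \<inter> D) ` (\<M> \<times> \<N>)" "Q \<in> (\<lambda>(C, D). C \<inter> D) ` (\<M> \<times> \<N>)"
  then obtain C D C' D' where cells: "C \<in> \<M>" "C' \<in> \<M>" "D \<in> \<N>" "D' \<in> \<N>"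
    and "P = C \<inter> D" "Q = C' \<inter> D'" by auto
  moreover have "(C \<inter> C') \<inter> (D \<inter> D') face_of C \<inter> D"
    using assms cells by (intro face_of_Int_Int) (auto simp: cell_complex_def)
  ultimately show "P \<inter> Q face_of P" by (simp add: Int_ac)
qed

lemma piecewise_linear_on_iff_cell_complex:
  "piecewise_linear_on K g \<longleftrightarrow>
     (\<exists>\<M>. cell_complex \<M> \<and> \<Union>\<M> = K \<and> continuous_on K g \<and> (\<forall>C\<in>\<M>. affine_on C g))"
proof
  assume "piecewise_linear_on K g"
  then obtain \<T> where T: "triangulation \<T>" "\<Union>\<T> = K" "continuous_on K g" "\<forall>T\<in>\<T>. affine_on T g"
    unfolding piecewise_linear_on_def affine_on_def by blast
  have "cell_complex \<T>"
    using T(1) unfolding triangulation_def cell_complex_def by (auto intro: simplex_imp_polytope)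
  with T show "\<exists>\<M>. cell_complex \<M> \<and> \<Union>\<M> = K \<and> continuous_on K g \<and> (\<forall>C\<in>\<M>. affine_on C g)"
    by blast
next
  assume "\<exists>\<M>. cell_complex \<M> \<and> \<Union>\<M> = K \<and> continuous_on K g \<and> (\<forall>C\<in>\<M>. affine_on C g)"
  then obtain \<M> where M: "cell_complex \<M>" "\<Union>\<M> = K" "continuous_on K g" "\<forall>C\<in>\<M>. affine_on C g"
    by blast
  show "piecewise_linear_on K g"
  proof (rule simplicial_subdivision_of_cell_complex)
    show "finite \<M>" "\<And>C. C \<in> \<M> \<Longrightarrow> polytope C"
      "\<And>C D. C \<in> \<M> \<Longrightarrow> D \<in> \<M> \<Longrightarrow> C \<inter> D face_of C"
      using M(1) by (auto simp: cell_complex_def)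
    fix \<T>
    assume T: "simplicial_complex \<T>" "\<Union>\<T> = \<Union>\<M>" "\<And>T. T \<in> \<T> \<Longrightarrow> \<exists>C. C \<in> \<M> \<and> T \<subseteq> C"
    have "\<forall>T\<in>\<T>. affine_on T g"
      using T(3) M(4) affine_on_subset by blast
    moreover have "triangulation \<T>"
      using T(1) unfolding simplicial_complex_def triangulation_def by blast
    ultimately show ?thesis
      using T(2) M(2,3) unfolding piecewise_linear_on_def affine_on_def by blast
  qed
qed

lemma piecewise_linear_on_common_cells:
  assumes "piecewise_linear_on K f" "piecewise_linear_on L g"
  obtains \<P> where "cell_complex \<P>" "\<Union>\<P> = K \<inter> L" "\<forall>P\<in>\<P>. affine_on P f \<and> affine_on P g"
proof -
  obtain \<M> where M: "cell_complex \<M>" "\<Union>\<M> = K" "\<forall>C\<in>\<M>. affine_on C f"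
    using assms(1) unfolding piecewise_linear_on_iff_cell_complex by blast
  obtain \<N> where N: "cell_complex \<N>" "\<Union>\<N> = L" "\<forall>D\<in>\<N>. affine_on D g"
    using assms(2) unfolding piecewise_linear_on_iff_cell_complex by blast
  let ?\<P> = "(\<lambda>(C, D). C \<inter> D) ` (\<M> \<times> \<N>)"
  have "cell_complex ?\<P>"
    using M(1) N(1) by (rule cell_complex_Int)
  moreover have "\<Union>?\<P> = K \<inter> L"
    using M(2) N(2) by auto
  moreover have "affine_on (C \<inter> D) f \<and> affine_on (C \<inter> D) g" if "C \<in> \<M>" "D \<in> \<N>" for C D
    using M(3) N(3) that by (meson Int_lower1 Int_lower2 affine_on_subset)
  then have "\<forall>P\<in>?\<P>. affine_on P f \<and> affine_on P g"
    by auto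
  ultimately show ?thesis
    using that by blast
qed

lemma piecewise_linear_on_continuous: "piecewise_linear_on K f \<Longrightarrow> continuous_on K f"
  unfolding piecewise_linear_on_def by blast

lemma piecewise_linear_on_add:
  assumes "piecewise_linear_on K f" "piecewise_linear_on K g"
  shows "piecewise_linear_on K (\<lambda>y. f y + g y)"
proof -
  obtain \<P> where P: "cell_complex \<P>" "\<Union>\<P> = K \<inter> K" "\<forall>P\<in>\<P>. affine_on P f \<and> affine_on P g"
    by (rule piecewise_linear_on_common_cells[OF assms])
  have "\<forall>P\<in>\<P>. affine_on P (\<lambda>y. f y + g y)"
    using P(3) affine_on_add by blast
  moreover have "continuous_on K (\<lambda>y. f y + g y)"
    using assms by (intro continuous_on_add[OF piecewise_linear_on_continuous piecewise_linear_on_continuous])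
  ultimately show ?thesis
    unfolding piecewise_linear_on_iff_cell_complex using P(1,2) by auto
qed

lemma piecewise_linear_on_cmult:
  assumes "piecewise_linear_on K f" shows "piecewise_linear_on K (\<lambda>y. r * f y)"
proof -
  obtain \<M> where M: "cell_complex \<M>" "\<Union>\<M> = K" "continuous_on K f" "\<forall>C\<in>\<M>. affine_on C f"
    using assms unfolding piecewise_linear_on_iff_cell_complex by blast
  have "\<forall>C\<in>\<M>. affine_on C (\<lambda>y. r * f y)"
    using M(4) affine_on_cmult by blast
  moreover have "continuous_on K (\<lambda>y. r * f y)"
    using continuous_on_mult[OF continuous_on_const M(3)] .
  ultimately show ?thesis
    unfolding piecewise_linear_on_iff_cell_complex using M(1,2) by blast
qed

lemma piecewise_linear_on_const:
  assumes "polytope K" shows "piecewise_linear_on K (\<lambda>y. r)"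
proof -
  have "cell_complex {K}"
    using assms by (simp add: cell_complex_def face_of_refl polytope_imp_convex)
  then show ?thesis
    unfolding piecewise_linear_on_iff_cell_complex
    by (intro exI[of _ "{K}"]) (simp add: affine_on_const)
qed

lemma cell_complex_linear_image:
  assumes "cell_complex \<M>" "linear f" "inj f"
  shows "cell_complex ((`) f ` \<M>)"
  unfolding cell_complex_def
proof (intro conjI ballI)
  show "finite ((`) f ` \<M>)"
    using assms(1) by (simp add: cell_complex_def)
  show "polytope P" if "P \<in> (`) f ` \<M>" for P
    using that assms(1) polytope_linear_image[OF assms(2)] by (auto simp: cell_complex_def)
  fix P Q assume "P \<in> (`) f ` \<M>" "Q \<in> (`) f ` \<M>"
  then obtain C D where CD: "C \<in> \<M>" "D \<in> \<M>" "P = f ` C" "Q = f ` D"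
    by blast
  have "C \<inter> D face_of C"
    using assms(1) CD(1,2) by (simp add: cell_complex_def)
  then show "P \<inter> Q face_of P"
    unfolding CD(3,4) image_Int[OF assms(3), symmetric] face_of_linear_image[OF assms(2,3)] .
qed

lemma piecewise_linear_on_reflect:
  assumes "piecewise_linear_on K g"
  shows "piecewise_linear_on (uminus ` K) (\<lambda>y. g (- y))"
proof -
  obtain \<M> where M: "cell_complex \<M>" "\<Union>\<M> = K" "continuous_on K g" "\<forall>C\<in>\<M>. affine_on C g"
    using assms unfolding piecewise_linear_on_iff_cell_complex by blast
  have "cell_complex ((`) uminus ` \<M>)"
    using M(1) by (rule cell_complex_linear_image) (simp_all add: linear_uminus)
  moreover have "\<Union>((`) uminus ` \<M>) = uminus ` K"
    using M(2) by blast
  moreover have "continuous_on (uminus ` K) (\<lambda>y. g (- y))"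
    by (rule continuous_on_compose2[OF M(3)]) (auto intro: continuous_intros)
  moreover have "affine_on (uminus ` C) (\<lambda>y. g (- y))" if aff: "affine_on C g" for C
  proof -
    obtain c b where "\<forall>y\<in>C. g y = c \<bullet> y + b"
      using aff unfolding affine_on_def by blast
    then have "\<forall>y\<in>uminus ` C. g (- y) = (- c) \<bullet> y + b"
      by auto
    then show ?thesis unfolding affine_on_def by blast
  qed
  ultimately show ?thesis
    unfolding piecewise_linear_on_iff_cell_complex using M(4) by blast
qed

section \<open>Extending piecewise linear functions to larger boxes\<close>

definition prism :: "'a::real_vector \<Rightarrow> 'a set \<Rightarrow> 'a set" where
  "prism w A = (\<lambda>(z, t). z + t *\<^sub>R w) ` (A \<times> {0..1})"

lemma mem_prism: "y \<in> prism w A \<longleftrightarrow> (\<exists>z\<in>A. \<exists>t. 0 \<le> t \<and> t \<le> 1 \<and> y = z + t *\<^sub>R w)"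
  unfolding prism_def by force

lemma prism_mono: "A \<subseteq> B \<Longrightarrow> prism w A \<subseteq> prism w B"
  unfolding prism_def by blast

lemma prism_eq_linear_image: "prism w A = (\<lambda>p. fst p + snd p *\<^sub>R w) ` (A \<times> {0..1})"
  unfolding prism_def by (simp add: case_prod_beta')

lemma linear_prism_map: "linear (\<lambda>p :: 'a::real_vector \<times> real. fst p + snd p *\<^sub>R w)"
  by (rule linearI) (auto simp: algebra_simps)

lemma polytope_prism:
  fixes A :: "'a::euclidean_space set"
  assumes "polytope A" shows "polytope (prism w A)"
proof -
  have "polytope (A \<times> {0..1::real})"
    using assms polytope_interval[of "0::real" 1] by (simp add: polytope_Times)
  then show ?thesis
    unfolding prism_eq_linear_image by (rule polytope_linear_image[OF linear_prism_map])
qed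

lemma convex_prism: "convex A \<Longrightarrow> convex (prism w A)"
  unfolding prism_eq_linear_image
  by (rule convex_linear_image[OF linear_prism_map convex_Times]) simp_all

lemma prism_decomp_unique:
  assumes "n \<bullet> w \<noteq> 0" "n \<bullet> z = c" "n \<bullet> z' = c" "z + t *\<^sub>R w = z' + t' *\<^sub>R w"
  shows "t = t'" "z = z'"
proof -
  have "n \<bullet> (z + t *\<^sub>R w) = n \<bullet> (z' + t' *\<^sub>R w)"
    using assms(4) by simp
  then show "t = t'"
    using assms(1-3) by (simp add: inner_add_right)
  then show "z = z'"
    using assms(4) by simp
qed

lemma prism_Int:
  assumes "n \<bullet> w \<noteq> 0" "A \<subseteq> {y. n \<bullet> y = c}" "A' \<subseteq> {y. n \<bullet> y = c}"
  shows "prism w A \<inter> prism w A' = prism w (A \<inter> A')"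
proof
  show "prism w A \<inter> prism w A' \<subseteq> prism w (A \<inter> A')"
  proof
    fix y assume "y \<in> prism w A \<inter> prism w A'"
    then obtain z t z' t' where zt: "z \<in> A" "0 \<le> t" "t \<le> 1" "y = z + t *\<^sub>R w"
      and zt': "z' \<in> A'" "y = z' + t' *\<^sub>R w"
      unfolding Int_iff mem_prism by blast
    have "z = z'"
      using prism_decomp_unique[OF assms(1), of z c z' t t'] zt zt' assms(2,3) by auto
    then show "y \<in> prism w (A \<inter> A')"
      unfolding mem_prism using zt zt' by blast
  qed
qed (simp add: prism_mono)

lemma prism_subset_halfspace_ge:
  assumes "n \<bullet> w > 0" "A \<subseteq> {y. n \<bullet> y = c}"
  shows "prism w A \<subseteq> {y. n \<bullet> y \<ge> c}"
proof
  fix y assume "y \<in> prism w A"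
  then obtain z t where "z \<in> A" "0 \<le> t" "y = z + t *\<^sub>R w"
    unfolding mem_prism by blast
  then show "y \<in> {y. n \<bullet> y \<ge> c}"
    using assms by (auto simp: inner_add_right)
qed

lemma prism_Int_halfspace_le:
  assumes "n \<bullet> w > 0" "A \<subseteq> {y. n \<bullet> y = c}"
  shows "prism w A \<inter> {y. n \<bullet> y \<le> c} = A"
proof
  show "prism w A \<inter> {y. n \<bullet> y \<le> c} \<subseteq> A"
  proof
    fix y assume y: "y \<in> prism w A \<inter> {y. n \<bullet> y \<le> c}"
    then obtain z t where zt: "z \<in> A" "0 \<le> t" "y = z + t *\<^sub>R w"
      unfolding Int_iff mem_prism by blast
    have "c + t * (n \<bullet> w) \<le> c"
      using y zt assms(2) by (auto simp: inner_add_right)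
    then have "t = 0"
      using zt(2) assms(1) by (simp add: mult_le_0_iff)
    then show "y \<in> A"
      using zt by simp
  qed
  show "A \<subseteq> prism w A \<inter> {y. n \<bullet> y \<le> c}"
    using assms(2) by (force simp: mem_prism)
qed

lemma prism_Int_hyperplane:
  assumes "n \<bullet> w > 0" "A \<subseteq> {y. n \<bullet> y = c}"
  shows "prism w A \<inter> {y. n \<bullet> y = c} = A"
  using prism_Int_halfspace_le[OF assms] assms(2) by auto

lemma face_of_prism:
  assumes nw: "n \<bullet> w \<noteq> 0" and A: "A \<subseteq> {y. n \<bullet> y = c}" and F: "F face_of A"
  shows "prism w F face_of prism w A"
  unfolding face_of_def
proof (intro conjI ballI impI)
  have FA: "F \<subseteq> A"
    using F face_of_imp_subset by blast
  then show "prism w F \<subseteq> prism w A"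
    by (rule prism_mono)
  show "convex (prism w F)"
    using F face_of_imp_convex convex_prism by blast
  fix a b x assume a: "a \<in> prism w A" and b: "b \<in> prism w A" and x: "x \<in> prism w F"
    and seg: "x \<in> open_segment a b"
  obtain za ta where za: "za \<in> A" "0 \<le> ta" "ta \<le> 1" "a = za + ta *\<^sub>R w"
    using a unfolding mem_prism by blast
  obtain zb tb where zb: "zb \<in> A" "0 \<le> tb" "tb \<le> 1" "b = zb + tb *\<^sub>R w"
    using b unfolding mem_prism by blast
  obtain zx tx where zx: "zx \<in> F" "x = zx + tx *\<^sub>R w"
    using x unfolding mem_prism by blast
  obtain u where u: "0 < u" "u < 1" "x = (1 - u) *\<^sub>R a + u *\<^sub>R b"
    using seg unfolding in_segment by blast
  define zm where "zm = (1 - u) *\<^sub>R za + u *\<^sub>R zb"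
  have "n \<bullet> za = c" "n \<bullet> zb = c" and zx_c: "n \<bullet> zx = c"
    using za(1) zb(1) zx(1) FA A by auto
  then have "n \<bullet> zm = c"
    unfolding zm_def by (simp add: inner_add_right algebra_simps)
  moreover have "x = zm + ((1 - u) * ta + u * tb) *\<^sub>R w"
    unfolding zm_def using u(3) za(4) zb(4) by (simp add: algebra_simps)
  ultimately have "zx = zm"
    using prism_decomp_unique(2)[OF nw zx_c] zx(2) by metis
  have "za \<in> F \<and> zb \<in> F"
  proof (cases "za = zb")
    case True
    then show ?thesis
      using \<open>zx = zm\<close> zx(1) unfolding zm_def by (simp add: algebra_simps)
  next
    case False
    then have "zx \<in> open_segment za zb"
      unfolding in_segment using u \<open>zx = zm\<close> zm_def by blast
    then show ?thesis
      using face_ofD[OF F _ za(1) zb(1) zx(1)] by blast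
  qed
  then show "a \<in> prism w F" "b \<in> prism w F"
    unfolding mem_prism using za zb by blast+
qed

lemma face_of_prism_Int_cell:
  assumes nw: "n \<bullet> w > 0" and C: "convex C" and D: "D \<subseteq> {y. n \<bullet> y \<le> c}"
    and CD: "C \<inter> D face_of C"
  shows "prism w (C \<inter> {y. n \<bullet> y = c}) \<inter> D face_of prism w (C \<inter> {y. n \<bullet> y = c})"
proof -
  let ?E = "{y. n \<bullet> y = c}"
  have E: "C \<inter> ?E \<subseteq> ?E"
    by blast
  have "prism w (C \<inter> ?E) \<inter> D = (prism w (C \<inter> ?E) \<inter> {y. n \<bullet> y \<le> c}) \<inter> D"
    using D by blast
  also have "\<dots> = (C \<inter> D) \<inter> ?E"
    unfolding prism_Int_halfspace_le[OF nw E] by blast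
  finally have eq: "prism w (C \<inter> ?E) \<inter> D = (C \<inter> D) \<inter> ?E" .
  have "prism w (C \<inter> ?E) \<inter> ?E face_of prism w (C \<inter> ?E)"
    using prism_subset_halfspace_ge[OF nw E]
    by (intro face_of_Int_supporting_hyperplane_ge convex_prism convex_Int C convex_hyperplane) blast
  then have "C \<inter> ?E face_of prism w (C \<inter> ?E)"
    using prism_Int_hyperplane[OF nw E] by simp
  then show ?thesis
    unfolding eq by (rule face_of_trans[OF face_of_slice[OF CD convex_hyperplane]])
qed

lemma face_of_cell_Int_prism:
  assumes nw: "n \<bullet> w > 0" and D: "convex D" "D \<subseteq> {y. n \<bullet> y \<le> c}" and DC: "D \<inter> C face_of D"
  shows "D \<inter> prism w (C \<inter> {y. n \<bullet> y = c}) face_of D"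
proof -
  let ?E = "{y. n \<bullet> y = c}"
  have E: "C \<inter> ?E \<subseteq> ?E"
    by blast
  have "D \<inter> prism w (C \<inter> ?E) = D \<inter> (prism w (C \<inter> ?E) \<inter> {y. n \<bullet> y \<le> c})"
    using D(2) by blast
  also have "\<dots> = (D \<inter> C) \<inter> (D \<inter> ?E)"
    unfolding prism_Int_halfspace_le[OF nw E] by blast
  finally have eq: "D \<inter> prism w (C \<inter> ?E) = (D \<inter> C) \<inter> (D \<inter> ?E)" .
  have "D \<inter> ?E face_of D"
    using D by (intro face_of_Int_supporting_hyperplane_le) blast+
  then show ?thesis
    unfolding eq by (rule face_of_Int[OF DC])
qed

lemma face_of_prism_Int_prism:
  assumes nw: "n \<bullet> w > 0" and CD: "C \<inter> D face_of C"
  shows "prism w (C \<inter> {y. n \<bullet> y = c}) \<inter> prism w (D \<inter> {y. n \<bullet> y = c})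
           face_of prism w (C \<inter> {y. n \<bullet> y = c})"
proof -
  let ?E = "{y. n \<bullet> y = c}"
  have "prism w (C \<inter> ?E) \<inter> prism w (D \<inter> ?E) = prism w ((C \<inter> ?E) \<inter> (D \<inter> ?E))"
    using nw by (intro prism_Int[where n = n and c = c]) auto
  also have "(C \<inter> ?E) \<inter> (D \<inter> ?E) = (C \<inter> D) \<inter> ?E"
    by blast
  finally have eq: "prism w (C \<inter> ?E) \<inter> prism w (D \<inter> ?E) = prism w ((C \<inter> D) \<inter> ?E)" .
  have "(C \<inter> D) \<inter> ?E face_of C \<inter> ?E"
    by (rule face_of_slice[OF CD convex_hyperplane])
  then show ?thesis
    unfolding eq using nw by (intro face_of_prism[where n = n and c = c]) auto
qed

lemma cell_complex_prism_extension:
  assumes M: "cell_complex \<M>" and below: "\<Union>\<M> \<subseteq> {y. n \<bullet> y \<le> c}" and nw: "n \<bullet> w > 0"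
  shows "cell_complex (\<M> \<union> (\<lambda>C. prism w (C \<inter> {y. n \<bullet> y = c})) ` \<M>)"
  unfolding cell_complex_def
proof (intro conjI ballI)
  let ?E = "{y. n \<bullet> y = c}"
  have fin: "finite \<M>" and pol: "\<And>C. C \<in> \<M> \<Longrightarrow> polytope C"
    and fc: "\<And>C D. C \<in> \<M> \<Longrightarrow> D \<in> \<M> \<Longrightarrow> C \<inter> D face_of C"
    using M by (auto simp: cell_complex_def)
  have cvx: "\<And>C. C \<in> \<M> \<Longrightarrow> convex C"
    using pol polytope_imp_convex by blast
  have le: "\<And>C. C \<in> \<M> \<Longrightarrow> C \<subseteq> {y. n \<bullet> y \<le> c}"
    using below by blast
  show "finite (\<M> \<union> (\<lambda>C. prism w (C \<inter> ?E)) ` \<M>)"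
    using fin by simp
  show "polytope P" if "P \<in> \<M> \<union> (\<lambda>C. prism w (C \<inter> ?E)) ` \<M>" for P
    using that pol polytope_prism polytope_Int_polyhedron polyhedron_hyperplane by blast
  fix P Q assume P: "P \<in> \<M> \<union> (\<lambda>C. prism w (C \<inter> ?E)) ` \<M>"
    and Q: "Q \<in> \<M> \<union> (\<lambda>C. prism w (C \<inter> ?E)) ` \<M>"
  show "P \<inter> Q face_of P"
    using P Q fc
    by (auto intro: face_of_prism_Int_cell[OF nw cvx le] face_of_cell_Int_prism[OF nw cvx le]
        face_of_prism_Int_prism[OF nw])
qed

text \<open>Oblique projection along w onto the halfspace {y. n \<bullet> y \<le> c} (for n \<bullet> w > 0).\<close>

definition retraction_along :: "'a::real_inner \<Rightarrow> real \<Rightarrow> 'a \<Rightarrow> 'a \<Rightarrow> 'a" where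
  "retraction_along n c w y = y - max 0 ((n \<bullet> y - c) / (n \<bullet> w)) *\<^sub>R w"

lemma retraction_along_halfspace: "n \<bullet> y \<le> c \<Longrightarrow> n \<bullet> w > 0 \<Longrightarrow> retraction_along n c w y = y"
  by (simp add: retraction_along_def divide_nonpos_pos)

lemma retraction_along_prism:
  assumes "n \<bullet> z = c" "0 \<le> t" "n \<bullet> w > 0"
  shows "retraction_along n c w (z + t *\<^sub>R w) = z"
  using assms by (simp add: retraction_along_def inner_add_right)

lemma continuous_on_retraction_along:
  "n \<bullet> w \<noteq> 0 \<Longrightarrow> continuous_on S (retraction_along n c w)"
  unfolding retraction_along_def by (intro continuous_intros) auto

lemma affine_on_prism_retraction:
  assumes aff: "affine_on C g" and nw: "n \<bullet> w > 0"
  shows "affine_on (prism w (C \<inter> {y. n \<bullet> y = c})) (\<lambda>y. g (retraction_along n c w y))"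
proof -
  obtain a b where ab: "\<forall>y\<in>C. g y = a \<bullet> y + b"
    using aff unfolding affine_on_def by blast
  define a' where "a' = a - ((a \<bullet> w) / (n \<bullet> w)) *\<^sub>R n"
  define b' where "b' = b + c * (a \<bullet> w) / (n \<bullet> w)"
  have "g (retraction_along n c w y) = a' \<bullet> y + b'"
    if y: "y \<in> prism w (C \<inter> {y. n \<bullet> y = c})" for y
  proof -
    obtain z t where zt: "z \<in> C" "n \<bullet> z = c" "0 \<le> t" "y = z + t *\<^sub>R w"
      using y unfolding mem_prism by blast
    have z: "z = y - ((n \<bullet> y - c) / (n \<bullet> w)) *\<^sub>R w"
      using zt(2,4) nw by (simp add: inner_add_right)
    have "g (retraction_along n c w y) = a \<bullet> z + b"
      using ab zt(1) retraction_along_prism[OF zt(2,3) nw] zt(4) by simp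
    also have "\<dots> = a' \<bullet> y + b'"
      unfolding z a'_def b'_def using nw by (simp add: inner_diff_right inner_diff_left field_simps)
    finally show ?thesis .
  qed
  then show ?thesis
    unfolding affine_on_def by blast
qed

lemma retraction_along_maps_into:
  assumes below: "B \<subseteq> {y. n \<bullet> y \<le> c}" and nw: "n \<bullet> w > 0"
  shows "retraction_along n c w ` (B \<union> prism w (B \<inter> {y. n \<bullet> y = c})) \<subseteq> B"
proof
  fix x assume "x \<in> retraction_along n c w ` (B \<union> prism w (B \<inter> {y. n \<bullet> y = c}))"
  then obtain y where y: "y \<in> B \<union> prism w (B \<inter> {y. n \<bullet> y = c})" "x = retraction_along n c w y"
    by blast
  show "x \<in> B"
  proof (cases "y \<in> B")
    case True
    then have "n \<bullet> y \<le> c"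
      using below by blast
    then show ?thesis
      using True y(2) retraction_along_halfspace[OF _ nw] by simp
  next
    case False
    then obtain z t where z: "z \<in> B" "n \<bullet> z = c" "0 \<le> t" "y = z + t *\<^sub>R w"
      using y(1) unfolding Un_iff mem_prism by blast
    then show ?thesis
      using y(2) retraction_along_prism[OF z(2,3) nw] by simp
  qed
qed

lemma piecewise_linear_on_prism_extension:
  assumes g: "piecewise_linear_on B g" and below: "B \<subseteq> {y. n \<bullet> y \<le> c}" and nw: "n \<bullet> w > 0"
  shows "piecewise_linear_on (B \<union> prism w (B \<inter> {y. n \<bullet> y = c}))
           (\<lambda>y. g (retraction_along n c w y))"
proof -
  let ?E = "{y. n \<bullet> y = c}"
  obtain \<M> where M: "cell_complex \<M>" "\<Union>\<M> = B" "continuous_on B g" "\<forall>C\<in>\<M>. affine_on C g"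
    using g unfolding piecewise_linear_on_iff_cell_complex by blast
  let ?\<N> = "\<M> \<union> (\<lambda>C. prism w (C \<inter> ?E)) ` \<M>"
  have "cell_complex ?\<N>"
    using M(2) below by (intro cell_complex_prism_extension[OF M(1) _ nw]) blast
  moreover have "\<Union>?\<N> = B \<union> prism w (B \<inter> ?E)"
    unfolding M(2)[symmetric] prism_def by blast
  moreover have "continuous_on (B \<union> prism w (B \<inter> ?E)) (\<lambda>y. g (retraction_along n c w y))"
    using nw by (intro continuous_on_compose2[OF M(3) continuous_on_retraction_along
          retraction_along_maps_into[OF below nw]]) auto
  moreover have "affine_on D (\<lambda>y. g (retraction_along n c w y))" if D: "D \<in> ?\<N>" for D
  proof (cases "D \<in> \<M>")
    case True
    then have "\<forall>y\<in>D. g (retraction_along n c w y) = g y"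
      using M(2) below retraction_along_halfspace[OF _ nw] by auto
    then show ?thesis
      using M(4) True unfolding affine_on_def by auto
  next
    case False
    then obtain C where "C \<in> \<M>" "D = prism w (C \<inter> ?E)"
      using D by blast
    then show ?thesis
      using M(4) affine_on_prism_retraction[OF _ nw] by blast
  qed
  ultimately show ?thesis
    unfolding piecewise_linear_on_iff_cell_complex by blast
qed

lemma cbox_Un_prism_upper_facet_subset:
  fixes lo hi :: "real^'n"
  assumes ord: "\<forall>i. lo$i \<le> hi$i" and lt: "hi$k < \<beta>"
  shows "cbox lo hi \<union> prism ((\<beta> - hi$k) *\<^sub>R axis k 1) (cbox lo hi \<inter> {y. axis k 1 \<bullet> y = hi$k})
           \<subseteq> cbox lo (\<chi> i. if i = k then \<beta> else hi$i)" (is "_ \<union> prism ?w _ \<subseteq> ?big")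
proof
  have w: "(z + t *\<^sub>R ?w) $ i = (if i = k then z$i + t * (\<beta> - hi$k) else z$i)" for z t i
    by (simp add: axis_def)
  fix y
  assume "y \<in> cbox lo hi \<union> prism ?w (cbox lo hi \<inter> {y. axis k 1 \<bullet> y = hi$k})"
  then consider "y \<in> cbox lo hi"
    | z t where "z \<in> cbox lo hi" "z$k = hi$k" "0 \<le> t" "t \<le> 1" "y = z + t *\<^sub>R ?w"
    unfolding Un_iff mem_prism by (auto simp: inner_axis')
  then show "y \<in> ?big"
  proof cases
    case 1
    then have "lo$i \<le> y$i \<and> y$i \<le> hi$i" for i
      unfolding mem_box_cart by blast
    moreover have "y$k \<le> \<beta>"
      using calculation[of k] lt by linarith
    ultimately show ?thesis
      unfolding mem_box_cart by simp
  next
    case 2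
    have "t * (\<beta> - hi$k) \<le> \<beta> - hi$k"
      using 2(4) lt by (simp add: mult_left_le_one_le)
    moreover have "0 \<le> t * (\<beta> - hi$k)"
      using 2(3) lt by simp
    ultimately show ?thesis
      using 2(1,2) ord unfolding 2(5) mem_box_cart w by (force intro: order_trans)
  qed
qed

lemma cbox_upper_extension_subset_Un_prism:
  fixes lo hi :: "real^'n"
  assumes ord: "\<forall>i. lo$i \<le> hi$i" and lt: "hi$k < \<beta>"
  shows "cbox lo (\<chi> i. if i = k then \<beta> else hi$i) \<subseteq>
           cbox lo hi \<union> prism ((\<beta> - hi$k) *\<^sub>R axis k 1) (cbox lo hi \<inter> {y. axis k 1 \<bullet> y = hi$k})"
    (is "?big \<subseteq> _ \<union> prism ?w _")
proof
  fix y assume "y \<in> ?big"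
  then have y: "lo$i \<le> y$i \<and> y$i \<le> (if i = k then \<beta> else hi$i)" for i
    unfolding mem_box_cart by simp
  show "y \<in> cbox lo hi \<union> prism ?w (cbox lo hi \<inter> {y. axis k 1 \<bullet> y = hi$k})"
  proof (cases "y$k \<le> hi$k")
    case True
    have "lo$i \<le> y$i \<and> y$i \<le> hi$i" for i
      using y[of i] True by (cases "i = k") auto
    then have "y \<in> cbox lo hi"
      unfolding mem_box_cart by blast
    then show ?thesis
      by blast
  next
    case False
    define t where "t = (y$k - hi$k) / (\<beta> - hi$k)"
    define z where "z = y - t *\<^sub>R ?w"
    have t: "0 \<le> t" "t \<le> 1"
      unfolding t_def using False lt y[of k] by auto
    have "t * (\<beta> - hi$k) = y$k - hi$k"
      unfolding t_def using lt by simp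
    then have z: "z$i = (if i = k then hi$k else y$i)" for i
      unfolding z_def by (simp add: axis_def)
    have "lo$i \<le> z$i \<and> z$i \<le> hi$i" for i
      using y[of i] ord False unfolding z by (cases "i = k") auto
    then have "z \<in> cbox lo hi \<inter> {y. axis k 1 \<bullet> y = hi$k}"
      using z[of k] by (simp add: mem_box_cart inner_axis')
    moreover have "y = z + t *\<^sub>R ?w"
      unfolding z_def by simp
    ultimately show ?thesis
      unfolding Un_iff mem_prism using t by blast
  qed
qed

lemma cbox_Un_prism_upper_facet:
  fixes lo hi :: "real^'n"
  assumes "\<forall>i. lo$i \<le> hi$i" "hi$k < \<beta>"
  shows "cbox lo hi \<union> prism ((\<beta> - hi$k) *\<^sub>R axis k 1) (cbox lo hi \<inter> {y. axis k 1 \<bullet> y = hi$k})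
           = cbox lo (\<chi> i. if i = k then \<beta> else hi$i)"
  using cbox_Un_prism_upper_facet_subset[OF assms] cbox_upper_extension_subset_Un_prism[OF assms]
  by (rule equalityI)

lemma piecewise_linear_on_extend_up:
  fixes lo hi :: "real^2"
  assumes g: "piecewise_linear_on (cbox lo hi) g" and ord: "\<forall>i. lo$i \<le> hi$i" and le: "hi$k \<le> \<beta>"
  obtains g' where "piecewise_linear_on (cbox lo (\<chi> i. if i = k then \<beta> else hi$i)) g'"
    "\<forall>y\<in>cbox lo hi. g' y = g y"
proof (cases "hi$k = \<beta>")
  case True
  then have "(\<chi> i. if i = k then \<beta> else hi$i) = hi"
    by (simp add: vec_eq_iff)
  then show ?thesis
    using g that by simp
next
  case False
  then have lt: "hi$k < \<beta>"
    using le by simp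
  let ?n = "axis k (1::real)" and ?w = "(\<beta> - hi$k) *\<^sub>R axis k (1::real)"
  have nw: "?n \<bullet> ?w > 0"
    using lt by (simp add: inner_axis_axis)
  have below: "cbox lo hi \<subseteq> {y. ?n \<bullet> y \<le> hi$k}"
    by (auto simp: mem_box_cart inner_axis')
  have "piecewise_linear_on (cbox lo (\<chi> i. if i = k then \<beta> else hi$i))
          (\<lambda>y. g (retraction_along ?n (hi$k) ?w y))"
    using piecewise_linear_on_prism_extension[OF g below nw]
    unfolding cbox_Un_prism_upper_facet[OF ord lt] .
  moreover have "\<forall>y\<in>cbox lo hi. g (retraction_along ?n (hi$k) ?w y) = g y"
    using below retraction_along_halfspace[OF _ nw] by auto
  ultimately show ?thesis
    using that by blast
qed

lemma piecewise_linear_on_extend_down: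
  fixes lo hi :: "real^2"
  assumes g: "piecewise_linear_on (cbox lo hi) g" and ord: "\<forall>i. lo$i \<le> hi$i" and le: "\<alpha> \<le> lo$k"
  obtains g' where "piecewise_linear_on (cbox (\<chi> i. if i = k then \<alpha> else lo$i) hi) g'"
    "\<forall>y\<in>cbox lo hi. g' y = g y"
proof -
  have "piecewise_linear_on (cbox (- hi) (- lo)) (\<lambda>y. g (- y))"
    using piecewise_linear_on_reflect[OF g] by simp
  moreover have "\<forall>i. (- hi)$i \<le> (- lo)$i" "(- lo)$k \<le> - \<alpha>"
    using ord le by auto
  ultimately obtain h where
    h: "piecewise_linear_on (cbox (- hi) (\<chi> i. if i = k then - \<alpha> else (- lo)$i)) h"
    and agree: "\<forall>y\<in>cbox (- hi) (- lo). h y = g (- y)"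
    by (rule piecewise_linear_on_extend_up)
  have "- (\<chi> i. if i = k then - \<alpha> else (- lo)$i) = (\<chi> i. if i = k then \<alpha> else lo$i)"
    by (simp add: vec_eq_iff)
  then have "piecewise_linear_on (cbox (\<chi> i. if i = k then \<alpha> else lo$i) hi) (\<lambda>y. h (- y))"
    using piecewise_linear_on_reflect[OF h] by simp
  moreover have "\<forall>y\<in>cbox lo hi. h (- y) = g y"
    using agree by (auto simp flip: uminus_interval_vector)
  ultimately show ?thesis
    using that by blast
qed

lemma piecewise_linear_on_extend_coordinate:
  fixes lo hi :: "real^2"
  assumes g: "piecewise_linear_on (cbox lo hi) g" and ord: "\<forall>i. lo$i \<le> hi$i"
    and "\<alpha> \<le> lo$k" "hi$k \<le> \<beta>"
  obtains g' where
    "piecewise_linear_on (cbox (\<chi> i. if i = k then \<alpha> else lo$i) (\<chi> i. if i = k then \<beta> else hi$i)) g'"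
    "\<forall>y\<in>cbox lo hi. g' y = g y"
proof -
  let ?hi = "\<chi> i. if i = k then \<beta> else hi$i"
  obtain g1 where g1: "piecewise_linear_on (cbox lo ?hi) g1" and agree1: "\<forall>y\<in>cbox lo hi. g1 y = g y"
    using piecewise_linear_on_extend_up[OF g ord \<open>hi$k \<le> \<beta>\<close>] by blast
  have "\<forall>i. lo$i \<le> ?hi$i"
    using ord \<open>hi$k \<le> \<beta>\<close> by (auto intro: order_trans)
  then obtain g2 where g2: "piecewise_linear_on (cbox (\<chi> i. if i = k then \<alpha> else lo$i) ?hi) g2"
    and agree2: "\<forall>y\<in>cbox lo ?hi. g2 y = g1 y"
    using piecewise_linear_on_extend_down[OF g1 _ \<open>\<alpha> \<le> lo$k\<close>] by blast
  have "cbox lo hi \<subseteq> cbox lo ?hi"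
    using \<open>hi$k \<le> \<beta>\<close> by (intro subset_interval_imp_cart(1)) simp
  then have "\<forall>y\<in>cbox lo hi. g2 y = g y"
    using agree1 agree2 by auto
  with g2 show ?thesis
    using that by blast
qed

lemma piecewise_linear_on_extend_box:
  fixes lo hi lo' hi' :: "real^2"
  assumes g: "piecewise_linear_on (cbox lo hi) g" and ne: "cbox lo hi \<noteq> {}"
    and sub: "cbox lo hi \<subseteq> cbox lo' hi'"
  obtains g' where "piecewise_linear_on (cbox lo' hi') g'" "\<forall>y\<in>cbox lo hi. g' y = g y"
proof -
  have ord: "\<forall>i. lo$i \<le> hi$i"
    using ne by (simp add: interval_ne_empty_cart)
  have bounds: "\<forall>i. lo'$i \<le> lo$i \<and> hi$i \<le> hi'$i"
    using sub ord by (simp add: subset_interval_cart)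
  define lo1 hi1 where "lo1 = (\<chi> i. if i = 1 then lo'$1 else lo$i)"
    and "hi1 = (\<chi> i. if i = 1 then hi'$1 else hi$i)"
  obtain g1 where g1: "piecewise_linear_on (cbox lo1 hi1) g1" and agree1: "\<forall>y\<in>cbox lo hi. g1 y = g y"
    unfolding lo1_def hi1_def
    using piecewise_linear_on_extend_coordinate[OF g ord, where k = 1 and \<alpha> = "lo'$1" and \<beta> = "hi'$1"]
      bounds by blast
  have "lo1$i \<le> hi1$i" for i
    using spec[OF ord, of i] spec[OF bounds, of i] unfolding lo1_def hi1_def by auto
  then have ord1: "\<forall>i. lo1$i \<le> hi1$i" ..
  have "(\<chi> i. if i = 2 then lo'$2 else lo1$i) = lo'" "(\<chi> i. if i = 2 then hi'$2 else hi1$i) = hi'"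
    unfolding lo1_def hi1_def by (simp_all add: vec_eq_iff forall_2)
  moreover have "lo'$2 \<le> lo1$2" "hi1$2 \<le> hi'$2"
    unfolding lo1_def hi1_def using bounds by simp_all
  ultimately obtain g2 where g2: "piecewise_linear_on (cbox lo' hi') g2"
    and agree2: "\<forall>y\<in>cbox lo1 hi1. g2 y = g1 y"
    using piecewise_linear_on_extend_coordinate[OF g1 ord1, where k = 2 and \<alpha> = "lo'$2" and \<beta> = "hi'$2"]
    by metis
  have "cbox lo hi \<subseteq> cbox lo1 hi1"
    unfolding lo1_def hi1_def using bounds by (intro subset_interval_imp_cart(1)) simp
  then have "\<forall>y\<in>cbox lo hi. g2 y = g y"
    using agree1 agree2 by auto
  with g2 show ?thesis
    using that by blast
qed

section \<open>The Riesz space R(X) and its point ideals\<close>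

lemma closed_cube_eq_cbox:
  assumes "closed_cube K" obtains a b where "K = cbox a b" "K \<noteq> {}"
proof -
  obtain a d where "d > 0" "K = cbox a (a + (\<chi> i. d))"
    using assms unfolding closed_cube_def by blast
  moreover have "a \<in> cbox a (a + (\<chi> i. d))"
    using \<open>d > 0\<close> by (simp add: mem_box_cart)
  ultimately show ?thesis
    using that by blast
qed

lemma bounded_subset_closed_cube:
  fixes S :: "(real^2) set"
  assumes "bounded S" obtains K where "closed_cube K" "S \<subseteq> K"
proof -
  obtain r where r: "\<forall>x\<in>S. norm x \<le> r" "r > 0"
    using assms bounded_pos by blast
  let ?K = "cbox (\<chi> i. - r) ((\<chi> i. - r) + (\<chi> i. 2 * r)) :: (real^2) set"
  have "closed_cube ?K"
    unfolding closed_cube_def using r(2) by (intro exI[of _ "\<chi> i. - r"] exI[of _ "2 * r"]) simp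
  moreover have "S \<subseteq> ?K"
  proof
    fix x assume "x \<in> S"
    then have abs_le: "\<bar>x$i\<bar> \<le> r" for i
      using r(1) component_le_norm_cart order_trans by blast
    have "- r \<le> x$i \<and> x$i \<le> - r + 2 * r" for i
      using abs_le[of i] by linarith
    then show "x \<in> ?K"
      unfolding mem_box_cart by simp
  qed
  ultimately show ?thesis
    using that by blast
qed

lemma piecewise_linear_on_extend_cube:
  assumes "closed_cube K" "closed_cube L" "K \<subseteq> L" "piecewise_linear_on K g"
  obtains g' where "piecewise_linear_on L g'" "\<forall>y\<in>K. g' y = g y"
proof -
  obtain a b where K: "K = cbox a b" "K \<noteq> {}"
    using assms(1) by (rule closed_cube_eq_cbox)
  obtain c d where L: "L = cbox c d"
    using assms(2) by (rule closed_cube_eq_cbox)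
  have "piecewise_linear_on (cbox a b) g" "cbox a b \<noteq> {}" "cbox a b \<subseteq> cbox c d"
    using assms(3,4) K L by auto
  then obtain g' where "piecewise_linear_on (cbox c d) g'" "\<forall>y\<in>cbox a b. g' y = g y"
    by (rule piecewise_linear_on_extend_box)
  then show ?thesis
    using that K(1) L by blast
qed

lemma RX_add:
  assumes "f \<in> RX X" "h \<in> RX X"
  shows "(\<lambda>y. f y + h y) \<in> RX X"
proof -
  obtain K1 g1 where K1: "closed_cube K1" "X \<subseteq> K1" "piecewise_linear_on K1 g1"
    and f: "\<forall>y. f y = (if y \<in> X then g1 y else 0)"
    using assms(1) unfolding RX_def by blast
  obtain K2 g2 where K2: "closed_cube K2" "X \<subseteq> K2" "piecewise_linear_on K2 g2"
    and h: "\<forall>y. h y = (if y \<in> X then g2 y else 0)"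
    using assms(2) unfolding RX_def by blast
  \<comment> \<open>the representing cubes may differ, so both functions are extended to a common cube\<close>
  have "bounded (K1 \<union> K2)"
    using K1(1) K2(1) unfolding closed_cube_def by auto
  then obtain L where L: "closed_cube L" "K1 \<union> K2 \<subseteq> L"
    by (rule bounded_subset_closed_cube)
  obtain g1' where g1': "piecewise_linear_on L g1'" "\<forall>y\<in>K1. g1' y = g1 y"
    using piecewise_linear_on_extend_cube[OF K1(1) L(1) _ K1(3)] L(2) by blast
  obtain g2' where g2': "piecewise_linear_on L g2'" "\<forall>y\<in>K2. g2' y = g2 y"
    using piecewise_linear_on_extend_cube[OF K2(1) L(1) _ K2(3)] L(2) by blast
  have "\<forall>y\<in>X. g1' y = g1 y \<and> g2' y = g2 y"
    using g1'(2) g2'(2) K1(2) K2(2) by blast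
  then have "\<forall>y. f y + h y = (if y \<in> X then g1' y + g2' y else 0)"
    using f h by simp
  moreover have "X \<subseteq> L"
    using K1(2) L(2) by blast
  ultimately show ?thesis
    unfolding RX_def using L(1) piecewise_linear_on_add[OF g1'(1) g2'(1)] by blast
qed

lemma RX_cmult:
  assumes "f \<in> RX X" shows "(\<lambda>y. r * f y) \<in> RX X"
proof -
  obtain K g where K: "closed_cube K" "X \<subseteq> K" "piecewise_linear_on K g"
    and f: "\<forall>y. f y = (if y \<in> X then g y else 0)"
    using assms unfolding RX_def by blast
  have "\<forall>y. r * f y = (if y \<in> X then r * g y else 0)"
    using f by simp
  then show ?thesis
    unfolding RX_def using K piecewise_linear_on_cmult by blast
qed

lemma RX_const:
  assumes "bounded X" shows "(\<lambda>y. if y \<in> X then r else 0) \<in> RX X"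
proof -
  obtain K where K: "closed_cube K" "X \<subseteq> K"
    using assms by (rule bounded_subset_closed_cube)
  moreover have "polytope K"
    using K(1) unfolding closed_cube_def by (auto intro: polytope_interval)
  ultimately show ?thesis
    unfolding RX_def using piecewise_linear_on_const by blast
qed

definition point_ideal :: "(real^2) set \<Rightarrow> real^2 \<Rightarrow> (real^2 \<Rightarrow> real) set" where
  "point_ideal X x = {f \<in> RX X. f x = 0}"

lemma riesz_ideal_point_ideal:
  assumes "bounded X" "x \<in> X" shows "riesz_ideal X (point_ideal X x)"
  unfolding riesz_ideal_def
proof (intro conjI ballI allI impI)
  show "point_ideal X x \<subseteq> RX X"
    unfolding point_ideal_def by blast
  show "(\<lambda>y. 0) \<in> point_ideal X x"
    using RX_const[OF assms(1), of 0] unfolding point_ideal_def by simp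
  show "(\<lambda>y. f y + g y) \<in> point_ideal X x" if "f \<in> point_ideal X x" "g \<in> point_ideal X x" for f g
    using that RX_add unfolding point_ideal_def by simp
  show "(\<lambda>y. c * f y) \<in> point_ideal X x" if "f \<in> point_ideal X x" for f c
    using that RX_cmult unfolding point_ideal_def by simp
  show "f \<in> point_ideal X x"
    if "f \<in> RX X" "g \<in> point_ideal X x" "\<forall>y\<in>X. \<bar>f y\<bar> \<le> \<bar>g y\<bar>" for f g
    using that assms(2) unfolding point_ideal_def by fastforce
qed

lemma maximal_ideal_point_ideal:
  assumes "bounded X" "x \<in> X" shows "maximal_ideal X (point_ideal X x)"
  unfolding maximal_ideal_def
proof (intro conjI allI impI)
  show I: "riesz_ideal X (point_ideal X x)"
    using assms by (rule riesz_ideal_point_ideal)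
  have "(\<lambda>y. if y \<in> X then 1 else 0) \<notin> point_ideal X x"
    using assms(2) unfolding point_ideal_def by simp
  then show "point_ideal X x \<noteq> RX X"
    using RX_const[OF assms(1), of 1] by blast
  fix J assume J: "riesz_ideal X J \<and> point_ideal X x \<subseteq> J"
  have "J = RX X" if "J \<noteq> point_ideal X x"
  proof -
    from that J obtain h where h: "h \<in> J" "h \<in> RX X" "h x \<noteq> 0"
      unfolding riesz_ideal_def point_ideal_def by blast
    have "f \<in> J" if f: "f \<in> RX X" for f
    proof -
      define f' where "f' = (\<lambda>y. f y + (- (f x / h x)) * h y)"
      have "f' \<in> RX X"
        unfolding f'_def by (intro RX_add[OF f] RX_cmult[OF h(2)])
      then have "f' \<in> point_ideal X x"
        unfolding point_ideal_def f'_def using h(3) by simp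
      then have "(\<lambda>y. f' y + (f x / h x) * h y) \<in> J"
        using J h(1) unfolding riesz_ideal_def by blast
      moreover have "(\<lambda>y. f' y + (f x / h x) * h y) = f"
        unfolding f'_def by auto
      ultimately show ?thesis
        by simp
    qed
    with J show "J = RX X"
      unfolding riesz_ideal_def by blast
  qed
  then show "J = point_ideal X x \<or> J = RX X"
    by blast
qed

lemma inter_of_maximal_ideals_principal_ideal:
  assumes "bounded X"
    and dominated: "\<And>f. f \<in> RX X \<Longrightarrow> \<forall>x\<in>X. g x = 0 \<longrightarrow> f x = 0 \<Longrightarrow>
                     \<exists>m::nat. \<forall>y\<in>X. \<bar>f y\<bar> \<le> real m * \<bar>g y\<bar>"
  shows "inter_of_maximal_ideals X (principal_ideal X g)"
proof -
  let ?\<M> = "point_ideal X ` {x \<in> X. g x = 0}"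
  have "principal_ideal X g = RX X \<inter> \<Inter>?\<M>"
  proof (intro equalityI subsetI)
    fix f assume "f \<in> principal_ideal X g"
    then obtain m :: nat where "f \<in> RX X" "\<forall>y\<in>X. \<bar>f y\<bar> \<le> real m * \<bar>g y\<bar>"
      unfolding principal_ideal_def by blast
    then show "f \<in> RX X \<inter> \<Inter>?\<M>"
      unfolding point_ideal_def by force
  next
    fix f assume "f \<in> RX X \<inter> \<Inter>?\<M>"
    then have "f \<in> RX X" "\<forall>x\<in>X. g x = 0 \<longrightarrow> f x = 0"
      unfolding point_ideal_def by auto
    then show "f \<in> principal_ideal X g"
      unfolding principal_ideal_def using dominated by blast
  qed
  moreover have "\<forall>M\<in>?\<M>. maximal_ideal X M"
    using maximal_ideal_point_ideal[OF assms(1)] by blast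
  ultimately show ?thesis
    unfolding inter_of_maximal_ideals_def by blast
qed

section \<open>Domination away from outgoing tangents\<close>

lemma pigeonhole_subseq:
  assumes "finite A" "\<forall>m::nat. \<exists>a\<in>A. P m a"
  obtains a and r :: "nat \<Rightarrow> nat" where "a \<in> A" "strict_mono r" "\<forall>k. P (r k) a"
proof -
  obtain sel where sel: "\<forall>m. sel m \<in> A \<and> P m (sel m)"
    using assms(2) by metis
  have "range sel \<subseteq> A"
    using sel by blast
  then have "finite (range sel)"
    using assms(1) by (rule finite_subset)
  then obtain m0 where "infinite {m \<in> UNIV. sel m = sel m0}"
    using pigeonhole_infinite[of UNIV sel] by blast
  then obtain r :: "nat \<Rightarrow> nat" where r: "strict_mono r" "\<forall>k. r k \<in> {m \<in> UNIV. sel m = sel m0}"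
    by (rule infinite_enumerate[THEN exE]) blast
  have "P (r k) (sel m0)" for k
    using r(2) sel[rule_format, of "r k"] by simp
  then show ?thesis
    using that[of "sel m0" r] r(1) sel by blast
qed

lemma tendsto_zero_if_scaled_bounded:
  fixes a :: "nat \<Rightarrow> real"
  assumes r: "strict_mono r" and bound: "\<forall>k. real (r k) * \<bar>a k\<bar> \<le> B"
  shows "a \<longlonglongrightarrow> 0"
proof (rule Lim_null_comparison)
  show "\<forall>\<^sub>F k in sequentially. norm (a k) \<le> B / real k"
  proof (rule eventually_sequentiallyI)
    fix k :: nat assume "1 \<le> k"
    have "real k * \<bar>a k\<bar> \<le> real (r k) * \<bar>a k\<bar>"
      using seq_suble[OF r, of k] by (simp add: mult_right_mono)
    then have "real k * \<bar>a k\<bar> \<le> B"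
      using bound by (meson order_trans)
    then show "norm (a k) \<le> B / real k"
      using \<open>1 \<le> k\<close> by (simp add: field_simps)
  qed
  show "(\<lambda>k. B / real k) \<longlonglongrightarrow> 0"
    by (rule lim_const_over_n)
qed

lemma ray_in_polytope_of_limit_direction:
  fixes P :: "'a::euclidean_space set"
  assumes P: "polytope P" and x: "x \<in> P" and q: "\<forall>k. q k \<in> P"
    and lim: "(\<lambda>k. (1 / norm (q k - x)) *\<^sub>R (q k - x)) \<longlonglongrightarrow> u" and "u \<noteq> 0"
  obtains t where "t > 0" "closed_segment x (x + t *\<^sub>R u) \<subseteq> P"
proof -
  obtain C where C: "finite C" "P = convex hull C"
    using P unfolding polytope_def by blast
  let ?D = "(\<lambda>c. - x + c) ` C"
  have hull_D: "convex hull ?D = (\<lambda>c. - x + c) ` P"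
    unfolding C(2) by (rule convex_hull_translation)
  have "(1 / norm (q k - x)) *\<^sub>R (q k - x) \<in> convex_cone hull ?D" for k
  proof -
    have "q k - x \<in> convex hull ?D"
      unfolding hull_D using imageI[of "q k" P "\<lambda>c. - x + c"] q by simp
    then have "q k - x \<in> convex_cone hull ?D"
      by (rule subsetD[OF convex_hull_subset_convex_cone_hull])
    then show ?thesis
      by (rule convex_cone_hull_mul) simp
  qed
  \<comment> \<open>the cone generated by a polytope is closed, so it contains the limit direction\<close>
  then have "u \<in> convex_cone hull ?D"
    by (rule closed_sequentially[OF closed_convex_cone_hull[OF finite_imageI[OF C(1)]] _ lim])
  moreover have "?D \<noteq> {}"
    using x C(2) by auto
  ultimately have "u \<in> (\<Union>p \<in> convex hull ?D. \<Union>c\<in>{0..}. {c *\<^sub>R p})"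
    by (metis convex_cone_hull_convex_hull_nonempty)
  then obtain p c where p: "p \<in> convex hull ?D" "c \<ge> 0" "u = c *\<^sub>R p"
    by blast
  then have "c > 0"
    using \<open>u \<noteq> 0\<close> by (cases "c = 0") auto
  obtain y where "y \<in> P" "p = - x + y"
    using p(1) unfolding hull_D by blast
  then have "x + (1 / c) *\<^sub>R u \<in> P"
    using p(3) \<open>c > 0\<close> by simp
  then have "closed_segment x (x + (1 / c) *\<^sub>R u) \<subseteq> P"
    using closed_segment_subset[OF x _ polytope_imp_convex[OF P]] by blast
  then show ?thesis
    using that[of "1 / c"] \<open>c > 0\<close> by simp
qed

lemma parallel_if_orthogonal_common_vector:
  fixes c d u v :: "real^2"
  assumes "c \<bullet> u = 0" "d \<bullet> u = 0" "u \<noteq> 0"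
  shows "(d \<bullet> v) *\<^sub>R c = (c \<bullet> v) *\<^sub>R d"
proof -
  have u: "c$1 * u$1 + c$2 * u$2 = 0" "d$1 * u$1 + d$2 * u$2 = 0"
    using assms(1,2) by (simp_all add: inner_vec_def sum_2)
  have "(c$1 * d$2 - c$2 * d$1) * u$1 = 0" "(c$1 * d$2 - c$2 * d$1) * u$2 = 0"
    using u by algebra+
  moreover have "u$1 \<noteq> 0 \<or> u$2 \<noteq> 0"
    using assms(3) by (simp add: vec_eq_iff forall_2)
  ultimately have "c$1 * d$2 = c$2 * d$1"
    by auto
  then show ?thesis
    by (simp add: vec_eq_iff forall_2 inner_vec_def sum_2 algebra_simps)
qed

lemma dominated_if_orthogonal_common_vector:
  fixes c d u :: "real^2"
  assumes "c \<bullet> u = 0" "d \<bullet> u = 0" "u \<noteq> 0" "c \<noteq> 0"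
  obtains m :: nat where "\<forall>v. \<bar>d \<bullet> v\<bar> \<le> real m * \<bar>c \<bullet> v\<bar>"
proof -
  obtain m :: nat where m: "norm d / norm c \<le> real m"
    using real_arch_simple by blast
  have "\<bar>d \<bullet> v\<bar> \<le> real m * \<bar>c \<bullet> v\<bar>" for v
  proof -
    have "\<bar>d \<bullet> v\<bar> * norm c = \<bar>c \<bullet> v\<bar> * norm d"
      using arg_cong[OF parallel_if_orthogonal_common_vector[OF assms(1-3), of v], of norm] by simp
    also have "\<dots> \<le> \<bar>c \<bullet> v\<bar> * (real m * norm c)"
      using m assms(4) by (intro mult_left_mono) (simp_all add: field_simps)
    finally show ?thesis
      using assms(4) by (simp add: algebra_simps)
  qed
  then show ?thesis
    using that by blast
qed

lemma points_on_ray_if_not_outgoing: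
  assumes "SB_tangent X x u" "\<not> outgoing_SB_tangent X x u" "x \<in> X" "t > 0"
  obtains s where "s > 0" "x + s *\<^sub>R u \<in> closed_segment x (x + t *\<^sub>R u) \<inter> X"
proof -
  have "\<not> (\<exists>\<mu>>0. closed_segment x (x + \<mu> *\<^sub>R u) \<inter> X = {x})"
    using assms(1,2) unfolding outgoing_SB_tangent_def by simp
  then have "closed_segment x (x + t *\<^sub>R u) \<inter> X \<noteq> {x}"
    using assms(4) by simp
  moreover have "x \<in> closed_segment x (x + t *\<^sub>R u) \<inter> X"
    using assms(3) by simp
  ultimately obtain z where z: "z \<in> closed_segment x (x + t *\<^sub>R u) \<inter> X" "z \<noteq> x"
    by blast
  obtain \<theta> where "0 \<le> \<theta>" "z = (1 - \<theta>) *\<^sub>R x + \<theta> *\<^sub>R (x + t *\<^sub>R u)"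
    using z(1) unfolding Int_iff in_segment by blast
  moreover from this(2) have z_eq: "z = x + (\<theta> * t) *\<^sub>R u"
    by (simp add: algebra_simps)
  moreover have "\<theta> * t \<noteq> 0"
    using z(2) z_eq by auto
  ultimately have "\<theta> * t > 0"
    using assms(4) by (simp add: zero_less_mult_iff)
  then show ?thesis
    using that z(1) z_eq by blast
qed

lemma tendsto_affine_on:
  assumes "affine_on P g" "\<forall>k. q k \<in> P" "x \<in> P" "q \<longlonglongrightarrow> x"
  shows "(\<lambda>k. g (q k)) \<longlonglongrightarrow> g x"
proof -
  obtain c b where cb: "\<forall>y\<in>P. g y = c \<bullet> y + b"
    using assms(1) unfolding affine_on_def by blast
  have "(\<lambda>k. c \<bullet> q k + b) \<longlonglongrightarrow> c \<bullet> x + b"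
    using assms(4) by (intro tendsto_intros)
  then show ?thesis
    using cb assms(2,3) by simp
qed

lemma affine_on_vanishing:
  assumes "affine_on P g" "x \<in> P" "g x = 0"
  obtains c where "\<forall>z\<in>P. g z = c \<bullet> (z - x)"
proof -
  obtain c b where cb: "\<forall>y\<in>P. g y = c \<bullet> y + b"
    using assms(1) unfolding affine_on_def by blast
  then have "b = - (c \<bullet> x)"
    using assms(2,3) by force
  then have "\<forall>z\<in>P. g z = c \<bullet> (z - x)"
    using cb by (simp add: inner_diff_right)
  then show ?thesis
    by (rule that)
qed

lemma undominated_scaleR:
  assumes "r * \<bar>c \<bullet> w\<bar> < \<bar>d \<bullet> w\<bar>" "a > 0"
  shows "r * \<bar>c \<bullet> (a *\<^sub>R w)\<bar> < \<bar>d \<bullet> (a *\<^sub>R w)\<bar>"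
proof -
  have "a * (r * \<bar>c \<bullet> w\<bar>) < a * \<bar>d \<bullet> w\<bar>"
    using assms by simp
  then show ?thesis
    using assms(2) by (simp add: abs_mult algebra_simps)
qed

lemma orthogonal_if_undominated_limit:
  assumes \<sigma>: "strict_mono \<sigma>" and undominated: "\<forall>k. real (\<sigma> k) * \<bar>c \<bullet> v k\<bar> < \<bar>d \<bullet> v k\<bar>"
    and norm_v: "\<forall>k. norm (v k) = 1" and lim: "v \<longlonglongrightarrow> u"
  shows "c \<bullet> u = 0"
proof -
  have "\<forall>k. real (\<sigma> k) * \<bar>c \<bullet> v k\<bar> \<le> norm d"
  proof
    fix k
    have "\<bar>d \<bullet> v k\<bar> \<le> norm d * norm (v k)"
      by (rule Cauchy_Schwarz_ineq2)
    then show "real (\<sigma> k) * \<bar>c \<bullet> v k\<bar> \<le> norm d"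
      using undominated norm_v by (metis less_imp_le mult.right_neutral order_trans)
  qed
  then have "(\<lambda>k. c \<bullet> v k) \<longlonglongrightarrow> 0"
    by (rule tendsto_zero_if_scaled_bounded[OF \<sigma>])
  moreover have "(\<lambda>k. c \<bullet> v k) \<longlonglongrightarrow> c \<bullet> u"
    using lim by (intro tendsto_intros)
  ultimately show ?thesis
    by (rule LIMSEQ_unique[symmetric])
qed

lemma outgoing_tangent_of_undominated_directions:
  fixes X P :: "(real^2) set" and q :: "nat \<Rightarrow> real^2"
  assumes P: "polytope P" and x: "x \<in> X" "x \<in> P"
    and q: "\<forall>k. q k \<in> X \<inter> P" "q \<longlonglongrightarrow> x" "\<forall>k. q k \<noteq> x"
    and u: "(\<lambda>k. (1 / norm (q k - x)) *\<^sub>R (q k - x)) \<longlonglongrightarrow> u" "norm u = 1"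
    and G: "\<forall>z\<in>P. G z = c \<bullet> (z - x)" and F: "\<forall>z\<in>P. F z = d \<bullet> (z - x)"
    and zeros: "\<forall>z\<in>X. G z = 0 \<longrightarrow> F z = 0"
    and \<sigma>: "strict_mono \<sigma>" and undominated: "\<forall>k. real (\<sigma> k) * \<bar>G (q k)\<bar> < \<bar>F (q k)\<bar>"
  shows "outgoing_SB_tangent X x u"
proof (rule ccontr)
  assume not_outgoing: "\<not> outgoing_SB_tangent X x u"
  define v where "v k = (1 / norm (q k - x)) *\<^sub>R (q k - x)" for k
  have v_ineq: "\<forall>k. real (\<sigma> k) * \<bar>c \<bullet> v k\<bar> < \<bar>d \<bullet> v k\<bar>"
  proof
    fix k
    have "real (\<sigma> k) * \<bar>c \<bullet> (q k - x)\<bar> < \<bar>d \<bullet> (q k - x)\<bar>"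
      using undominated G F q(1) by auto
    then show "real (\<sigma> k) * \<bar>c \<bullet> v k\<bar> < \<bar>d \<bullet> v k\<bar>"
      unfolding v_def by (rule undominated_scaleR) (use q(3) in simp)
  qed
  moreover have "\<forall>k. norm (v k) = 1"
    unfolding v_def using q(3) by simp
  moreover have "v \<longlonglongrightarrow> u"
    using u(1) unfolding v_def .
  ultimately have cu: "c \<bullet> u = 0"
    by (rule orthogonal_if_undominated_limit[OF \<sigma>])
  have "u \<noteq> 0"
    using u(2) by auto
  then obtain t where t: "t > 0" "closed_segment x (x + t *\<^sub>R u) \<subseteq> P"
    using ray_in_polytope_of_limit_direction[OF P x(2) _ u(1)] q(1) by blast
  have "SB_tangent X x u"
    unfolding SB_tangent_def using u q by (intro conjI exI[of _ q]) auto
  then obtain s where s: "s > 0" "x + s *\<^sub>R u \<in> closed_segment x (x + t *\<^sub>R u) \<inter> X"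
    by (rule points_on_ray_if_not_outgoing[OF _ not_outgoing x(1) t(1)])
  with t(2) have "x + s *\<^sub>R u \<in> P \<inter> X"
    by blast
  then have "F (x + s *\<^sub>R u) = 0"
    using G zeros cu by simp
  then have du: "d \<bullet> u = 0"
    using F s(1) \<open>x + s *\<^sub>R u \<in> P \<inter> X\<close> by simp
  have "c \<noteq> 0"
  proof
    assume "c = 0"
    then have "F (q 0) = 0"
      using G zeros q(1) by auto
    moreover have "0 \<le> real (\<sigma> 0) * \<bar>G (q 0)\<bar>"
      by simp
    ultimately show False
      using undominated[rule_format, of 0] by linarith
  qed
  then obtain m :: nat where m: "\<forall>v. \<bar>d \<bullet> v\<bar> \<le> real m * \<bar>c \<bullet> v\<bar>"
    using dominated_if_orthogonal_common_vector[OF cu du \<open>u \<noteq> 0\<close>] by blast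
  have "real m * \<bar>c \<bullet> v m\<bar> \<le> real (\<sigma> m) * \<bar>c \<bullet> v m\<bar>"
    using seq_suble[OF \<sigma>, of m] by (simp add: mult_right_mono)
  then show False
    using m[rule_format, of "v m"] v_ineq[rule_format, of m] by linarith
qed

lemma undominated_limit_is_zero:
  fixes q :: "nat \<Rightarrow> 'a::euclidean_space"
  assumes F: "affine_on P F" and G: "affine_on P G" and q: "\<forall>k. q k \<in> P" "x \<in> P" "q \<longlonglongrightarrow> x"
    and \<sigma>: "strict_mono \<sigma>" and undominated: "\<forall>k. real (\<sigma> k) * \<bar>G (q k)\<bar> < \<bar>F (q k)\<bar>"
  shows "G x = 0"
proof -
  have "convergent (\<lambda>k. F (q k))"
    using tendsto_affine_on[OF F q] by (rule convergentI)
  then have "Bseq (\<lambda>k. F (q k))"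
    by (rule convergent_imp_Bseq)
  then obtain B where B: "\<forall>k. norm (F (q k)) \<le> B"
    unfolding Bseq_def by blast
  have "\<forall>k. real (\<sigma> k) * \<bar>G (q k)\<bar> \<le> B"
  proof
    fix k
    show "real (\<sigma> k) * \<bar>G (q k)\<bar> \<le> B"
      using undominated[rule_format, of k] B[rule_format, of k] by simp
  qed
  then have "(\<lambda>k. G (q k)) \<longlonglongrightarrow> 0"
    by (rule tendsto_zero_if_scaled_bounded[OF \<sigma>])
  moreover have "(\<lambda>k. G (q k)) \<longlonglongrightarrow> G x"
    using tendsto_affine_on[OF G q] .
  ultimately show ?thesis
    by (rule LIMSEQ_unique[symmetric])
qed

lemma outgoing_tangent_of_undominated_sequence:
  fixes X P :: "(real^2) set" and q :: "nat \<Rightarrow> real^2"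
  assumes P: "polytope P" and x: "x \<in> X" "x \<in> P"
    and q: "\<forall>k. q k \<in> X \<inter> P" "q \<longlonglongrightarrow> x" "\<forall>k. q k \<noteq> x"
    and G: "\<forall>z\<in>P. G z = c \<bullet> (z - x)" and F: "\<forall>z\<in>P. F z = d \<bullet> (z - x)"
    and zeros: "\<forall>z\<in>X. G z = 0 \<longrightarrow> F z = 0"
    and \<sigma>: "strict_mono \<sigma>" and undominated: "\<forall>k. real (\<sigma> k) * \<bar>G (q k)\<bar> < \<bar>F (q k)\<bar>"
  obtains u where "outgoing_SB_tangent X x u"
proof -
  have "\<forall>k. (1 / norm (q k - x)) *\<^sub>R (q k - x) \<in> sphere 0 1"
    using q(3) by simp
  then obtain u and \<rho> :: "nat \<Rightarrow> nat" where "u \<in> sphere 0 1" "strict_mono \<rho>"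
    and "((\<lambda>k. (1 / norm (q k - x)) *\<^sub>R (q k - x)) \<circ> \<rho>) \<longlonglongrightarrow> u"
    by (rule seq_compactE[OF compact_imp_seq_compact[OF compact_sphere]])
  moreover have "(q \<circ> \<rho>) \<longlonglongrightarrow> x"
    using LIMSEQ_subseq_LIMSEQ[OF q(2) \<open>strict_mono \<rho>\<close>] .
  moreover have "strict_mono (\<sigma> \<circ> \<rho>)"
    using \<sigma> \<open>strict_mono \<rho>\<close> by (rule strict_mono_o)
  moreover have "\<forall>k. (q \<circ> \<rho>) k \<in> X \<inter> P" "\<forall>k. (q \<circ> \<rho>) k \<noteq> x"
    "\<forall>k. real ((\<sigma> \<circ> \<rho>) k) * \<bar>G ((q \<circ> \<rho>) k)\<bar> < \<bar>F ((q \<circ> \<rho>) k)\<bar>"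
    using q(1,3) undominated by simp_all
  ultimately have "outgoing_SB_tangent X x u"
    using outgoing_tangent_of_undominated_directions[OF P x _ _ _ _ _ G F zeros]
    by (simp add: o_def)
  then show ?thesis
    using that by blast
qed

lemma undominated_sequence_in_cell:
  fixes X :: "'a::euclidean_space set"
  assumes X: "compact X" and \<P>: "finite \<P>" "\<forall>P\<in>\<P>. polytope P" "X \<subseteq> \<Union>\<P>"
    and undominated: "\<forall>m::nat. \<exists>y\<in>X. real m * \<bar>G y\<bar> < \<bar>F y\<bar>"
  obtains P x q and \<sigma> :: "nat \<Rightarrow> nat" where "P \<in> \<P>" "x \<in> X \<inter> P" "\<forall>k. q k \<in> X \<inter> P" "q \<longlonglongrightarrow> x"
    "strict_mono \<sigma>" "\<forall>k. real (\<sigma> k) * \<bar>G (q k)\<bar> < \<bar>F (q k)\<bar>"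
proof -
  have "\<forall>m::nat. \<exists>P\<in>\<P>. \<exists>y\<in>X \<inter> P. real m * \<bar>G y\<bar> < \<bar>F y\<bar>"
    using undominated \<P>(3) by blast
  with \<P>(1) obtain P and r :: "nat \<Rightarrow> nat" where P: "P \<in> \<P>" and r: "strict_mono r"
    and "\<forall>k. \<exists>y\<in>X \<inter> P. real (r k) * \<bar>G y\<bar> < \<bar>F y\<bar>"
    by (rule pigeonhole_subseq[where P = "\<lambda>m P. \<exists>y\<in>X \<inter> P. real m * \<bar>G y\<bar> < \<bar>F y\<bar>"])
  then have "\<forall>k. \<exists>y. y \<in> X \<inter> P \<and> real (r k) * \<bar>G y\<bar> < \<bar>F y\<bar>"
    by blast
  then obtain y where y: "\<forall>k. y k \<in> X \<inter> P \<and> real (r k) * \<bar>G (y k)\<bar> < \<bar>F (y k)\<bar>"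
    by (rule choice[THEN exE])
  have "compact (X \<inter> P)"
    using X P \<P>(2) polytope_imp_compact compact_Int by blast
  moreover have "\<forall>k. y k \<in> X \<inter> P"
    using y by blast
  ultimately obtain x and \<rho> :: "nat \<Rightarrow> nat" where "x \<in> X \<inter> P" "strict_mono \<rho>" "(y \<circ> \<rho>) \<longlonglongrightarrow> x"
    using compact_imp_seq_compact seq_compactE by metis
  moreover have "strict_mono (r \<circ> \<rho>)"
    using r \<open>strict_mono \<rho>\<close> by (rule strict_mono_o)
  ultimately show ?thesis
    using that[of P x "y \<circ> \<rho>" "r \<circ> \<rho>"] P y by simp
qed

lemma dominated_if_no_outgoing_tangent:
  assumes X: "compact X" and no_tangent: "\<not> (\<exists>x\<in>X. \<exists>u. outgoing_SB_tangent X x u)"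
    and f: "f \<in> RX X" and g: "g \<in> RX X" and zeros: "\<forall>x\<in>X. g x = 0 \<longrightarrow> f x = 0"
  shows "\<exists>m::nat. \<forall>y\<in>X. \<bar>f y\<bar> \<le> real m * \<bar>g y\<bar>"
proof (rule ccontr)
  assume not_dominated: "\<not> ?thesis"
  obtain KF F where KF: "X \<subseteq> KF" "piecewise_linear_on KF F" and f_eq: "\<forall>y\<in>X. f y = F y"
    using f unfolding RX_def by auto
  obtain KG G where KG: "X \<subseteq> KG" "piecewise_linear_on KG G" and g_eq: "\<forall>y\<in>X. g y = G y"
    using g unfolding RX_def by auto
  obtain \<P> where \<P>: "cell_complex \<P>" "\<Union>\<P> = KF \<inter> KG" "\<forall>P\<in>\<P>. affine_on P F \<and> affine_on P G"
    by (rule piecewise_linear_on_common_cells[OF KF(2) KG(2)])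
  have "\<forall>m::nat. \<exists>y\<in>X. real m * \<bar>G y\<bar> < \<bar>F y\<bar>"
    using not_dominated f_eq g_eq by (auto simp: not_le)
  moreover have "finite \<P>" "\<forall>P\<in>\<P>. polytope P" "X \<subseteq> \<Union>\<P>"
    using \<P>(1,2) KF(1) KG(1) unfolding cell_complex_def by auto
  ultimately obtain P x q and \<sigma> :: "nat \<Rightarrow> nat" where P: "P \<in> \<P>" and x: "x \<in> X \<inter> P"
    and q: "\<forall>k. q k \<in> X \<inter> P" "q \<longlonglongrightarrow> x" and \<sigma>: "strict_mono \<sigma>"
    and undominated: "\<forall>k. real (\<sigma> k) * \<bar>G (q k)\<bar> < \<bar>F (q k)\<bar>"
    using undominated_sequence_in_cell[OF X] by metis
  have "polytope P" "affine_on P F" "affine_on P G"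
    using P \<P>(1,3) unfolding cell_complex_def by auto
  then have Gx: "G x = 0"
    using q x \<sigma> undominated by (intro undominated_limit_is_zero[of P F G q]) auto
  then have Fx: "F x = 0"
    using zeros f_eq g_eq x by auto
  obtain c where c: "\<forall>z\<in>P. G z = c \<bullet> (z - x)"
    using affine_on_vanishing \<open>affine_on P G\<close> x Gx by blast
  obtain d where d: "\<forall>z\<in>P. F z = d \<bullet> (z - x)"
    using affine_on_vanishing \<open>affine_on P F\<close> x Fx by blast
  have "\<forall>k. q k \<noteq> x"
    using undominated Gx Fx by (metis abs_zero less_irrefl mult_zero_right)
  moreover have "\<forall>z\<in>X. G z = 0 \<longrightarrow> F z = 0"
    using zeros f_eq g_eq by simp
  moreover have "x \<in> X" "x \<in> P"
    using x by auto
  ultimately obtain u where "outgoing_SB_tangent X x u"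
    using outgoing_tangent_of_undominated_sequence[OF \<open>polytope P\<close> _ _ q _ c d _ \<sigma> undominated]
    by metis
  then show False
    using no_tangent x by blast
qed

theorem lemma4p3:
  fixes X :: "(real^2) set"
  assumes "X \<noteq> {}" and "compact X"
    and "\<exists>g\<in>RX X. \<not> inter_of_maximal_ideals X (principal_ideal X g)"
  shows "\<exists>x\<in>X. \<exists>u. outgoing_SB_tangent X x u"
proof (rule ccontr)
  assume no_tangent: "\<not> (\<exists>x\<in>X. \<exists>u. outgoing_SB_tangent X x u)"
  obtain g where g: "g \<in> RX X" "\<not> inter_of_maximal_ideals X (principal_ideal X g)"
    using assms(3) by blast
  have "inter_of_maximal_ideals X (principal_ideal X g)"
  proof (rule inter_of_maximal_ideals_principal_ideal)
    show "bounded X"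
      using assms(2) by (rule compact_imp_bounded)
    show "\<exists>m::nat. \<forall>y\<in>X. \<bar>f y\<bar> \<le> real m * \<bar>g y\<bar>"
      if "f \<in> RX X" "\<forall>x\<in>X. g x = 0 \<longrightarrow> f x = 0" for f
      using dominated_if_no_outgoing_tangent[OF assms(2) no_tangent that(1) g(1) that(2)] .
  qed
  with g(2) show False
    by contradiction
qed

end
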